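(* Let $\Sigma$ be a graded alphabet, $L$ a finite tree language over $\Sigma$, and $A_L=(\Sigma,Q,\nu,\delta)$ the sequential subtree automaton of $L$. Then for every tree $r\in\mathrm{SubTreeSet}(L)$, $\Delta(r)=\{r\}$.
   Context: A graded alphabet is a finite set $\Sigma=\bigcup_{k\in\mathbb{N}}\Sigma_k$; $T_\Sigma$ is the set of trees $f(t_1,\ldots,t_k)$ with $f\in\Sigma_k$. A RWTA is $A=(\Sigma,Q,\nu,\delta)$ with $Q$ finite, $\nu:Q\to\mathbb{N}$, $\delta\subseteq\bigcup_k Q\times\Sigma_k\times Q^k$; $\delta(f,q_1,\ldots,q_k)=\{q\mid(q,f,q_1,\ldots,q_k)\in\delta\}$, extended to subsets by union over tuples; $\Delta(f(t_1,\ldots,t_k))=\delta(f,\Delta(t_1),\ldots,\Delta(t_k))$. For $t=f(t_1,\ldots,t_k)$, $\mathrm{SubTree}(t)=\{t\}\cup\bigcup_j\mathrm{SubTree}(t_j)$; $\mathrm{SubTreeSet}(L)=\bigcup_{t\in L}\mathrm{SubTree}(t)$; $\mathrm{SubTreeSeries}_t(s)$ is the number of nodes of $t$ whose subtree equals $s$ and $\mathrm{SubTreeSeries}_L=\sum_{t\in L}\mathrm{SubTreeSeries}_t$. The sequential subtree automaton of $L$ is $A_L=(\Sigma,Q,\nu,\delta)$ with $Q=\mathrm{SubTreeSet}(L)$, $\nu(t')=\mathrm{SubTreeSeries}_L(t')$, and for $f\in\Sigma_k$ and $t_1,\ldots,t_{k+1}\in Q$: $t_{k+1}\in\delta(f,t_1,\ldots,t_k)$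 iff $t_{k+1}=f(t_1,\ldots,t_k)$. *)

theory Defs
  imports Main
begin

datatype 'f tree = Node 'f "'f tree list"

(* A graded alphabet: a finite set of symbols Sig with a rank function;
   Sigma_k = {f in Sig. rank f = k}. *)
definition graded_alphabet :: "'f set \<Rightarrow> ('f \<Rightarrow> nat) \<Rightarrow> bool" where
  "graded_alphabet Sig rank \<longleftrightarrow> finite Sig"

inductive_set trees :: "'f set \<Rightarrow> ('f \<Rightarrow> nat) \<Rightarrow> 'f tree set"
  for Sig rank where
  "f \<in> Sig \<Longrightarrow> length ts = rank f \<Longrightarrow> (\<forall>t\<in>set ts. t \<in> trees Sig rank)
     \<Longrightarrow> Node f ts \<in> trees Sig rank"

(* RWTA (Sig, Q, nu, delta); transitions (q, f, [q_1..q_k]) *)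
record ('f, 'q) rwta =
  alph :: "'f set"
  rnk :: "'f \<Rightarrow> nat"
  states :: "'q set"
  weight :: "'q \<Rightarrow> nat"
  trans :: "('q \<times> 'f \<times> 'q list) set"

definition delta_set :: "('f, 'q) rwta \<Rightarrow> 'f \<Rightarrow> 'q set list \<Rightarrow> 'q set" where
  "delta_set A f Qs = {q. \<exists>qs. list_all2 (\<in>) qs Qs \<and> (q, f, qs) \<in> trans A}"

fun Delta :: "('f, 'q) rwta \<Rightarrow> 'f tree \<Rightarrow> 'q set" where
  "Delta A (Node f ts) = delta_set A f (map (Delta A) ts)"

fun SubTree :: "'f tree \<Rightarrow> 'f tree set" where
  "SubTree (Node f ts) = insert (Node f ts) (\<Union>t\<in>set ts. SubTree t)"

definition SubTreeSet :: "'f tree set \<Rightarrow> 'f tree set" where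
  "SubTreeSet L = (\<Union>t\<in>L. SubTree t)"

fun SubTreeSeries_t :: "'f tree \<Rightarrow> 'f tree \<Rightarrow> nat" where
  "SubTreeSeries_t (Node f ts) s = (if Node f ts = s then 1 else 0) + sum_list (map (\<lambda>t. SubTreeSeries_t t s) ts)"

definition SubTreeSeries :: "'f tree set \<Rightarrow> 'f tree \<Rightarrow> nat" where
  "SubTreeSeries L s = (\<Sum>t\<in>L. SubTreeSeries_t t s)"

definition subtree_automaton :: "'f set \<Rightarrow> ('f \<Rightarrow> nat) \<Rightarrow> 'f tree set \<Rightarrow> ('f, 'f tree) rwta" where
  "subtree_automaton Sig rank L =
    \<lparr> alph = Sig, rnk = rank, states = SubTreeSet L, weight = SubTreeSeries L,
      trans = {(t', f, ts) | t' f ts. f \<in> Sig \<and> length ts = rank f \<and>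
                set ts \<subseteq> SubTreeSet L \<and> t' \<in> SubTreeSet L \<and> t' = Node f ts} \<rparr>"

end

theory Submission
  imports Defs
begin

text \<open>Each state of the subtree automaton only admits the transition that rebuilds it from its
  children, so by induction on r every child is read into exactly itself, and then r is read into
  exactly r.\<close>

lemma SubTree_trees_closed:
  assumes "t \<in> trees Sig rank" and "s \<in> SubTree t"
  shows "s \<in> trees Sig rank"
  using assms
proof (induction t rule: trees.induct)
  case (1 f ts)
  then show ?case by (auto intro: trees.intros)
qed

lemma SubTree_refl [simp]: "t \<in> SubTree t"
  by (cases t) auto

lemma SubTree_child:
  assumes "Node f us \<in> SubTree t" and "u \<in> set us"
  shows "u \<in> SubTree t"
  using assms
proof (induction t)
  case (Node g ts)
  show ?case
  proof (cases "Node f us = Node g ts")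
    case True
    then show ?thesis
      using Node.prems(2) SubTree_refl by (simp del: SubTree_refl) blast
  next
    case False
    then obtain t where "t \<in> set ts" "Node f us \<in> SubTree t"
      using Node.prems(1) by auto
    then show ?thesis
      using Node.IH Node.prems(2) by auto
  qed
qed

lemma SubTreeSet_child:
  "Node f us \<in> SubTreeSet L \<Longrightarrow> u \<in> set us \<Longrightarrow> u \<in> SubTreeSet L"
  unfolding SubTreeSet_def by (blast intro: SubTree_child)

lemma SubTreeSet_trees_closed:
  "L \<subseteq> trees Sig rank \<Longrightarrow> s \<in> SubTreeSet L \<Longrightarrow> s \<in> trees Sig rank"
  unfolding SubTreeSet_def by (blast intro: SubTree_trees_closed)

lemma list_all2_member_singletons: "list_all2 (\<in>) xs (map (\<lambda>y. {y}) ys) \<longleftrightarrow> xs = ys"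
proof (induction ys arbitrary: xs)
  case Nil
  then show ?case by simp
next
  case (Cons y ys)
  then show ?case by (cases xs) auto
qed

lemma delta_set_subtree_automaton_singletons:
  assumes "Node f ts \<in> SubTreeSet L" and "f \<in> Sig" and "length ts = rank f"
  shows "delta_set (subtree_automaton Sig rank L) f (map (\<lambda>t. {t}) ts) = {Node f ts}"
proof -
  have "set ts \<subseteq> SubTreeSet L"
    using assms(1) by (blast intro: SubTreeSet_child)
  then show ?thesis
    using assms by (auto simp: delta_set_def list_all2_member_singletons subtree_automaton_def)
qed

lemma Delta_subtree_automaton_SubTreeSet:
  assumes "L \<subseteq> trees Sig rank" and "r \<in> SubTreeSet L"
  shows "Delta (subtree_automaton Sig rank L) r = {r}"
  using assms(2)
proof (induction r)
  case (Node f ts)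
  let ?A = "subtree_automaton Sig rank L"
  have "Node f ts \<in> trees Sig rank"
    using assms(1) Node.prems by (rule SubTreeSet_trees_closed)
  then have f: "f \<in> Sig" "length ts = rank f"
    by (auto elim: trees.cases)
  have "map (Delta ?A) ts = map (\<lambda>t. {t}) ts"
  proof (rule map_cong)
    fix u assume "u \<in> set ts"
    then show "Delta ?A u = {u}"
      using Node.IH Node.prems by (blast intro: SubTreeSet_child)
  qed simp
  then have "Delta ?A (Node f ts) = delta_set ?A f (map (\<lambda>t. {t}) ts)"
    by (simp only: Delta.simps)
  also have "\<dots> = {Node f ts}"
    using Node.prems f by (rule delta_set_subtree_automaton_singletons)
  finally show ?case .
qed

theorem lemma9:
  fixes Sig :: "'f set" and rank :: "'f \<Rightarrow> nat" and L :: "'f tree set"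
  assumes "graded_alphabet Sig rank"
    and "finite L" and "L \<subseteq> trees Sig rank"
    and "r \<in> SubTreeSet L"
  shows "Delta (subtree_automaton Sig rank L) r = {r}"
  using Delta_subtree_automaton_SubTreeSet assms(3,4) .

end
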